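(* Let $n\ge 1$ and let $G_0=\mathbb{Z}^n$ be the graph with vertex set $\mathbb{Z}^n$ and edges between $a,b\in\mathbb{Z}^n$ iff $\sum_{k=1}^n|a_k-b_k|=1$. Let $G_{l+1}$ be the clique graph of $G_l$ for $l\ge0$. Then $G_{l+2}\cong G_l$ for every $l\ge 0$; in particular $G_{2k}\cong \mathbb{Z}^n$ and $G_{2k+1}\cong G_1$ for all $k\ge 0$.
   Context: Graphs are simple and undirected. A clique is a maximal complete subgraph. The clique graph of a graph $H$ has as vertices the cliques of $H$, two distinct cliques being adjacent iff they share at least one vertex. $\cong$ denotes graph isomorphism (bijection on vertices preserving adjacency in both directions). *)

theory Defs
  imports Main
begin

definition is_graph :: "'a set \<Rightarrow> ('a \<Rightarrow> 'a \<Rightarrow> bool) \<Rightarrow> bool" where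
  "is_graph V E \<longleftrightarrow> (\<forall>x y. E x y \<longrightarrow> x \<in> V \<and> y \<in> V \<and> E y x \<and> x \<noteq> y)"

definition complete_set :: "'a set \<Rightarrow> ('a \<Rightarrow> 'a \<Rightarrow> bool) \<Rightarrow> 'a set \<Rightarrow> bool" where
  "complete_set V E C \<longleftrightarrow> C \<subseteq> V \<and> (\<forall>x\<in>C. \<forall>y\<in>C. x \<noteq> y \<longrightarrow> E x y)"

definition is_clique :: "'a set \<Rightarrow> ('a \<Rightarrow> 'a \<Rightarrow> bool) \<Rightarrow> 'a set \<Rightarrow> bool" where
  "is_clique V E C \<longleftrightarrow> C \<noteq> {} \<and> complete_set V E C \<and>
     (\<forall>D. complete_set V E D \<and> C \<subseteq> D \<longrightarrow> D = C)"

definition clique_V :: "'a set \<Rightarrow> ('a \<Rightarrow> 'a \<Rightarrow> bool) \<Rightarrow> 'a set set" where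
  "clique_V V E = {C. is_clique V E C}"

definition clique_E :: "'a set \<Rightarrow> ('a \<Rightarrow> 'a \<Rightarrow> bool) \<Rightarrow> 'a set \<Rightarrow> 'a set \<Rightarrow> bool" where
  "clique_E V E C D \<longleftrightarrow> C \<in> clique_V V E \<and> D \<in> clique_V V E \<and> C \<noteq> D \<and> C \<inter> D \<noteq> {}"

definition graph_iso :: "'a set \<Rightarrow> ('a \<Rightarrow> 'a \<Rightarrow> bool) \<Rightarrow> 'b set \<Rightarrow> ('b \<Rightarrow> 'b \<Rightarrow> bool) \<Rightarrow> bool" where
  "graph_iso V E V' E' \<longleftrightarrow>
     (\<exists>f. bij_betw f V V' \<and> (\<forall>x\<in>V. \<forall>y\<in>V. E x y \<longleftrightarrow> E' (f x) (f y)))"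

definition grid_V :: "nat \<Rightarrow> int list set" where
  "grid_V n = {a. length a = n}"

definition grid_E :: "nat \<Rightarrow> int list \<Rightarrow> int list \<Rightarrow> bool" where
  "grid_E n a b \<longleftrightarrow> a \<in> grid_V n \<and> b \<in> grid_V n \<and> (\<Sum>k<n. \<bar>a ! k - b ! k\<bar>) = 1"

end

theory Submission
  imports Defs
begin

text \<open>The grid \<open>\<int>\<^sup>n\<close> is triangle-free (adjacent points have coordinate sums of
  different parity) and every vertex has at least two neighbours. In such a graph the cliques
  are exactly the edges, so its clique graph is its line graph. The cliques of the line graph
  are exactly the stars of vertices: edges that pairwise meet without a common vertex would
  form a triangle. Since distinct vertices of degree at least two have distinct stars, and two
  stars meet iff their centres are adjacent, \<open>v \<mapsto> star v\<close> is an isomorphism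
  \<open>G \<cong> K(K(G))\<close>. As the clique graph operator \<open>K\<close> respects isomorphism,
  \<open>G\<^sub>l\<^sub>+\<^sub>2 \<cong> K(K(G\<^sub>l))\<close>, and induction on \<open>l\<close> gives
  \<open>G\<^sub>l\<^sub>+\<^sub>2 \<cong> G\<^sub>l\<close>.\<close>

section \<open>Isomorphism invariance of the clique graph\<close>

lemma graph_iso_refl: "graph_iso V E V E"
  unfolding graph_iso_def by (rule exI[of _ id]) auto

lemma graph_iso_sym:
  assumes "graph_iso V E V' E'"
  shows "graph_iso V' E' V E"
proof -
  obtain f where f: "bij_betw f V V'" and adj: "\<forall>x\<in>V. \<forall>y\<in>V. E x y \<longleftrightarrow> E' (f x) (f y)"
    using assms unfolding graph_iso_def by blast
  let ?g = "inv_into V f"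
  have g: "bij_betw ?g V' V"
    using f by (rule bij_betw_inv_into)
  have "E' x y \<longleftrightarrow> E (?g x) (?g y)" if "x \<in> V'" "y \<in> V'" for x y
  proof -
    have "?g x \<in> V" "?g y \<in> V"
      using g that by (auto dest: bij_betwE)
    moreover have "f (?g x) = x" "f (?g y) = y"
      using f that by (auto simp: bij_betw_def f_inv_into_f)
    ultimately show ?thesis
      using adj by metis
  qed
  then show ?thesis
    using g unfolding graph_iso_def by blast
qed

lemma graph_iso_trans:
  assumes "graph_iso V1 E1 V2 E2" and "graph_iso V2 E2 V3 E3"
  shows "graph_iso V1 E1 V3 E3"
proof -
  obtain f where f: "bij_betw f V1 V2"
    and adj_f: "\<forall>x\<in>V1. \<forall>y\<in>V1. E1 x y \<longleftrightarrow> E2 (f x) (f y)"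
    using assms(1) unfolding graph_iso_def by blast
  obtain g where g: "bij_betw g V2 V3"
    and adj_g: "\<forall>x\<in>V2. \<forall>y\<in>V2. E2 x y \<longleftrightarrow> E3 (g x) (g y)"
    using assms(2) unfolding graph_iso_def by blast
  have "\<forall>x\<in>V1. \<forall>y\<in>V1. E1 x y \<longleftrightarrow> E3 (g (f x)) (g (f y))"
    using adj_f adj_g bij_betwE[OF f] by simp
  then show ?thesis
    using bij_betw_trans[OF f g] unfolding graph_iso_def comp_def by blast
qed

context
  fixes f :: "'a \<Rightarrow> 'b" and V :: "'a set" and E and V' :: "'b set" and E'
  assumes bij: "bij_betw f V V'"
    and adj: "\<forall>x\<in>V. \<forall>y\<in>V. E x y \<longleftrightarrow> E' (f x) (f y)"
begin

lemma complete_set_image_iff: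
  assumes "C \<subseteq> V"
  shows "complete_set V' E' (f ` C) \<longleftrightarrow> complete_set V E C"
proof -
  have "inj_on f C"
    using bij assms by (auto simp: bij_betw_def intro: inj_on_subset)
  moreover have "f ` C \<subseteq> V'"
    using bij assms by (auto dest: bij_betwE)
  ultimately show ?thesis
    using adj assms unfolding complete_set_def by (auto simp: inj_on_eq_iff subset_iff)
qed

lemma image_restrict_vimage:
  assumes "D \<subseteq> V'"
  shows "f ` (V \<inter> f -` D) = D"
  using assms bij unfolding bij_betw_def by blast

lemma is_clique_image_iff:
  assumes C: "C \<subseteq> V"
  shows "is_clique V' E' (f ` C) \<longleftrightarrow> is_clique V E C"
proof
  assume clique: "is_clique V' E' (f ` C)"
  have "D = C" if "complete_set V E D" "C \<subseteq> D" for D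
  proof -
    have "D \<subseteq> V"
      using that(1) by (simp add: complete_set_def)
    then have "f ` D = f ` C"
      using clique that complete_set_image_iff unfolding is_clique_def by (meson image_mono)
    then show ?thesis
      using bij C \<open>D \<subseteq> V\<close> inj_on_image_eq_iff unfolding bij_betw_def by metis
  qed
  then show "is_clique V E C"
    using clique complete_set_image_iff[OF C] unfolding is_clique_def by blast
next
  assume clique: "is_clique V E C"
  have "D = f ` C" if "complete_set V' E' D" "f ` C \<subseteq> D" for D
  proof -
    have D: "D \<subseteq> V'"
      using that(1) by (simp add: complete_set_def)
    have "complete_set V E (V \<inter> f -` D)"
      using that(1) complete_set_image_iff[of "V \<inter> f -` D"] image_restrict_vimage[OF D] by simp
    moreover have "C \<subseteq> V \<inter> f -` D"
      using C that(2) by blast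
    ultimately have "V \<inter> f -` D = C"
      using clique unfolding is_clique_def by blast
    then show ?thesis
      using image_restrict_vimage[OF D] by simp
  qed
  then show "is_clique V' E' (f ` C)"
    using clique complete_set_image_iff[OF C] unfolding is_clique_def by blast
qed

end

lemma graph_iso_clique_graph:
  assumes "graph_iso V E V' E'"
  shows "graph_iso (clique_V V E) (clique_E V E) (clique_V V' E') (clique_E V' E')"
proof -
  obtain f where bij: "bij_betw f V V'" and adj: "\<forall>x\<in>V. \<forall>y\<in>V. E x y \<longleftrightarrow> E' (f x) (f y)"
    using assms unfolding graph_iso_def by blast
  have inj: "inj_on f V"
    using bij by (simp add: bij_betw_def)
  have sub: "C \<subseteq> V" if "C \<in> clique_V V E" for C
    using that by (simp add: clique_V_def is_clique_def complete_set_def)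
  have image_clique: "f ` C \<in> clique_V V' E' \<longleftrightarrow> C \<in> clique_V V E" if "C \<subseteq> V" for C
    using is_clique_image_iff[OF bij adj that] by (simp add: clique_V_def)
  have "inj_on ((`) f) (clique_V V E)"
    using inj sub by (auto intro!: inj_onI simp: inj_on_image_eq_iff)
  moreover have "(`) f ` clique_V V E = clique_V V' E'"
  proof (intro equalityI subsetI)
    fix D assume D: "D \<in> clique_V V' E'"
    then have "D \<subseteq> V'"
      by (simp add: clique_V_def is_clique_def complete_set_def)
    then have "D = f ` (V \<inter> f -` D)"
      using image_restrict_vimage[OF bij adj] by simp
    then show "D \<in> (`) f ` clique_V V E"
      using D image_clique[of "V \<inter> f -` D"] by auto
  qed (use image_clique sub in auto)
  moreover have "clique_E V E C D \<longleftrightarrow> clique_E V' E' (f ` C) (f ` D)"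
    if "C \<in> clique_V V E" "D \<in> clique_V V E" for C D
    using that image_clique sub inj_on_image_Int[OF inj sub sub] inj_on_image_eq_iff[OF inj sub sub]
    unfolding clique_E_def by (metis image_is_empty)
  ultimately show ?thesis
    unfolding graph_iso_def bij_betw_def by blast
qed

section \<open>Triangle-free graphs of minimum degree two\<close>

locale triangle_free_min_degree_two =
  fixes V :: "'a set" and E :: "'a \<Rightarrow> 'a \<Rightarrow> bool"
  assumes graph: "is_graph V E"
    and triangle_free: "E x y \<Longrightarrow> E y z \<Longrightarrow> E x z \<Longrightarrow> False"
    and two_neighbours: "x \<in> V \<Longrightarrow> \<exists>u w. E x u \<and> E x w \<and> u \<noteq> w"
begin

lemma adj_sym: "E x y \<Longrightarrow> E y x"
  using graph by (simp add: is_graph_def)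

lemma adj_in_V: "E x y \<Longrightarrow> x \<in> V \<and> y \<in> V \<and> x \<noteq> y"
  using graph by (simp add: is_graph_def)

definition edges :: "'a set set" where
  "edges = {{x, y} | x y. E x y}"

definition star :: "'a \<Rightarrow> 'a set set" where
  "star v = {{v, w} | w. E v w}"

lemma complete_set_eq_edge:
  assumes "complete_set V E D" "E a b" "a \<in> D" "b \<in> D"
  shows "D = {a, b}"
proof -
  have "c \<in> {a, b}" if "c \<in> D" for c
    using assms that triangle_free[of a b c] adj_sym unfolding complete_set_def by blast
  then show ?thesis
    using assms by blast
qed

lemma edge_is_clique:
  assumes "E a b"
  shows "is_clique V E {a, b}"
proof -
  have "complete_set V E {a, b}"
    using assms adj_in_V[OF assms] adj_sym unfolding complete_set_def by blast
  then show ?thesis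
    using assms complete_set_eq_edge unfolding is_clique_def by blast
qed

lemma clique_V_eq_edges: "clique_V V E = edges"
proof (intro equalityI subsetI)
  fix C assume "C \<in> clique_V V E"
  then have C: "is_clique V E C"
    by (simp add: clique_V_def)
  then have compl: "complete_set V E C"
    and maximal: "\<And>D. complete_set V E D \<Longrightarrow> C \<subseteq> D \<Longrightarrow> D = C"
    unfolding is_clique_def by blast+
  obtain a where a: "a \<in> C" "a \<in> V"
    using C unfolding is_clique_def complete_set_def by blast
  show "C \<in> edges"
  proof (cases "C = {a}")
    case True
    obtain u where "E a u"
      using two_neighbours[OF \<open>a \<in> V\<close>] by blast
    then have "{a, u} = C"
      using maximal True edge_is_clique unfolding is_clique_def by blast
    then show ?thesis
      using \<open>E a u\<close> unfolding edges_def by blast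
  next
    case False
    then obtain b where "b \<in> C" "b \<noteq> a"
      using a by blast
    then have "E a b"
      using compl a(1) unfolding complete_set_def by auto
    then have "C = {a, b}"
      using complete_set_eq_edge[OF compl _ a(1) \<open>b \<in> C\<close>] by blast
    then show ?thesis
      using \<open>E a b\<close> unfolding edges_def by blast
  qed
next
  fix C assume "C \<in> edges"
  then show "C \<in> clique_V V E"
    using edge_is_clique unfolding edges_def clique_V_def by blast
qed

lemma clique_E_iff: "clique_E V E C D \<longleftrightarrow> C \<in> edges \<and> D \<in> edges \<and> C \<noteq> D \<and> C \<inter> D \<noteq> {}"
  unfolding clique_E_def clique_V_eq_edges ..

lemma edge_in_star: "e \<in> edges \<Longrightarrow> v \<in> e \<Longrightarrow> e \<in> star v"
  unfolding edges_def star_def using adj_sym by (auto simp: insert_commute)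

lemma star_subset_edges: "star v \<subseteq> edges"
  unfolding star_def edges_def by blast

lemma Inter_star:
  assumes "v \<in> V"
  shows "\<Inter> (star v) = {v}"
proof -
  obtain u w where "E v u" "E v w" "u \<noteq> w"
    using two_neighbours[OF assms] by blast
  then have "{v, u} \<in> star v" "{v, w} \<in> star v"
    unfolding star_def by blast+
  with \<open>u \<noteq> w\<close> show ?thesis
    unfolding star_def by blast
qed

lemma inj_on_star: "inj_on star V"
  by (metis Inter_star inj_onI singleton_inject)

lemma edge_meeting_two_star_edges:
  assumes "e \<in> edges" "E v u" "E v w" "u \<noteq> w"
    and "e \<inter> {v, u} \<noteq> {}" "e \<inter> {v, w} \<noteq> {}"
  shows "v \<in> e"
proof (rule ccontr)
  assume "v \<notin> e"
  with assms have "e = {u, w}"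
    unfolding edges_def by auto
  then have "E u w"
    using \<open>e \<in> edges\<close> adj_sym unfolding edges_def by (auto simp: doubleton_eq_iff)
  then show False
    using triangle_free assms(2,3) by blast
qed

lemma star_is_clique:
  assumes "v \<in> V"
  shows "is_clique edges (clique_E V E) (star v)"
  unfolding is_clique_def
proof (intro conjI allI impI)
  obtain u w where uw: "E v u" "E v w" "u \<noteq> w"
    using two_neighbours[OF assms] by blast
  then have in_star: "{v, u} \<in> star v" "{v, w} \<in> star v"
    unfolding star_def by blast+
  then show "star v \<noteq> {}"
    by blast
  show "complete_set edges (clique_E V E) (star v)"
    unfolding complete_set_def clique_E_iff using star_subset_edges by (auto simp: star_def)
  fix D assume D: "complete_set edges (clique_E V E) D \<and> star v \<subseteq> D"
  then have D_edges: "D \<subseteq> edges"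
    and meet: "\<And>e e'. e \<in> D \<Longrightarrow> e' \<in> D \<Longrightarrow> e \<noteq> e' \<Longrightarrow> e \<inter> e' \<noteq> {}"
    unfolding complete_set_def clique_E_iff by blast+
  have "v \<in> e" if "e \<in> D" for e
  proof (rule ccontr)
    assume "v \<notin> e"
    then have "e \<inter> {v, u} \<noteq> {}" "e \<inter> {v, w} \<noteq> {}"
      using meet[OF that] in_star D by blast+
    then show False
      using edge_meeting_two_star_edges[OF _ uw] D_edges that \<open>v \<notin> e\<close> by blast
  qed
  then show "D = star v"
    using D D_edges edge_in_star by blast
qed

lemma clique_is_star:
  assumes C: "is_clique edges (clique_E V E) C"
  shows "\<exists>v\<in>V. C = star v"
proof -
  have C_edges: "C \<subseteq> edges"
    and meet: "\<And>e e'. e \<in> C \<Longrightarrow> e' \<in> C \<Longrightarrow> e \<noteq> e' \<Longrightarrow> e \<inter> e' \<noteq> {}"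
    using C unfolding is_clique_def complete_set_def clique_E_iff by blast+
  obtain a b where ab: "{a, b} \<in> C" "E a b"
    using C C_edges unfolding is_clique_def edges_def by blast
  have "C \<subseteq> star a \<or> C \<subseteq> star b"
  proof (rule ccontr)
    assume "\<not> ?thesis"
    then obtain e1 e2 where e1: "e1 \<in> C" "e1 \<notin> star a" and e2: "e2 \<in> C" "e2 \<notin> star b"
      by blast
    have "a \<notin> e1" "b \<notin> e2"
      using e1 e2 C_edges edge_in_star by blast+
    then have "e1 \<inter> {a, b} \<noteq> {}" "e2 \<inter> {a, b} \<noteq> {}" "e1 \<noteq> e2"
      using meet[OF e1(1) ab(1)] meet[OF e2(1) ab(1)] edge_in_star C_edges e1 by auto
    then have "b \<in> e1"
      using \<open>a \<notin> e1\<close> by blast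
    then obtain c where c: "e1 = {b, c}" "E b c"
      using e1 C_edges edge_in_star unfolding star_def by blast
    have "e2 \<inter> {b, c} \<noteq> {}"
      using meet[OF e2(1) e1(1)] \<open>e1 \<noteq> e2\<close> c by auto
    moreover have "a \<noteq> c"
      using \<open>a \<notin> e1\<close> c by blast
    ultimately have "b \<in> e2"
      using edge_meeting_two_star_edges[of e2 b a c] \<open>e2 \<inter> {a, b} \<noteq> {}\<close> e2(1) C_edges
        ab(2) c(2) adj_sym
      by (auto simp: insert_commute)
    then show False
      using \<open>b \<notin> e2\<close> by blast
  qed
  moreover have "a \<in> V" "b \<in> V"
    using adj_in_V[OF ab(2)] by auto
  ultimately show ?thesis
    using C star_is_clique unfolding is_clique_def by metis
qed

lemma star_Int_star_nonempty_iff: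
  assumes "v \<noteq> w"
  shows "star v \<inter> star w \<noteq> {} \<longleftrightarrow> E v w"
  using assms adj_sym unfolding star_def by (auto simp: doubleton_eq_iff)

theorem second_clique_graph_iso:
  "graph_iso V E (clique_V (clique_V V E) (clique_E V E)) (clique_E (clique_V V E) (clique_E V E))"
  unfolding graph_iso_def clique_V_eq_edges
proof (intro exI conjI)
  have "star ` V = clique_V edges (clique_E V E)"
    using star_is_clique clique_is_star unfolding clique_V_def by blast
  then show star_bij: "bij_betw star V (clique_V edges (clique_E V E))"
    using inj_on_star by (simp add: bij_betw_def)
  show "\<forall>v\<in>V. \<forall>w\<in>V. E v w \<longleftrightarrow> clique_E edges (clique_E V E) (star v) (star w)"
  proof (intro ballI)
    fix v w assume "v \<in> V" "w \<in> V"
    then have "star v \<in> clique_V edges (clique_E V E)" "star w \<in> clique_V edges (clique_E V E)"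
      and "star v = star w \<longleftrightarrow> v = w"
      using star_bij inj_on_star by (auto dest: bij_betwE simp: inj_on_eq_iff)
    then show "E v w \<longleftrightarrow> clique_E edges (clique_E V E) (star v) (star w)"
      using adj_in_V[of v w] star_Int_star_nonempty_iff[of v w] unfolding clique_E_def by auto
  qed
qed

end

section \<open>The grid\<close>

lemma grid_E_sym: "grid_E n a b \<Longrightarrow> grid_E n b a"
  unfolding grid_E_def by (simp add: abs_minus_commute)

lemma grid_E_irrefl: "\<not> grid_E n a a"
  unfolding grid_E_def by simp

lemma is_graph_grid: "is_graph (grid_V n) (grid_E n)"
  unfolding is_graph_def using grid_E_sym grid_E_irrefl by (auto simp: grid_E_def)

lemma grid_E_odd_sum_diff:
  assumes "grid_E n a b"
  shows "odd ((\<Sum>k<n. a ! k) - (\<Sum>k<n. b ! k))"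
proof -
  have "even (\<Sum>k<n. \<bar>a ! k - b ! k\<bar> - (a ! k - b ! k))"
    by (intro dvd_sum) (auto simp: abs_if)
  then show ?thesis
    using assms by (simp add: grid_E_def sum_subtractf)
qed

lemma grid_triangle_free: "grid_E n a b \<Longrightarrow> grid_E n b c \<Longrightarrow> grid_E n a c \<Longrightarrow> False"
  by (drule grid_E_odd_sum_diff)+ (metis diff_add_cancel odd_add add_diff_eq)

lemma grid_E_update:
  assumes "a \<in> grid_V n" "k < n" "\<bar>c\<bar> = 1"
  shows "grid_E n a (a[k := a ! k + c])"
proof -
  have "(\<Sum>i<n. \<bar>a ! i - a[k := a ! k + c] ! i\<bar>) = (\<Sum>i<n. if i = k then 1 else 0)"
    using assms by (intro sum.cong) (auto simp: grid_V_def nth_list_update)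
  then show ?thesis
    using assms by (simp add: grid_E_def grid_V_def)
qed

lemma grid_triangle_free_min_degree_two:
  assumes "n \<ge> 1"
  shows "triangle_free_min_degree_two (grid_V n) (grid_E n)"
proof
  fix a assume "a \<in> grid_V n"
  then have "grid_E n a (a[0 := a ! 0 + 1])" "grid_E n a (a[0 := a ! 0 - 1])"
    using assms grid_E_update[of a n 0 1] grid_E_update[of a n 0 "- 1"] by simp_all
  moreover have "a[0 := a ! 0 + 1] ! 0 \<noteq> a[0 := a ! 0 - 1] ! 0"
    using assms \<open>a \<in> grid_V n\<close> by (simp add: grid_V_def)
  ultimately show "\<exists>u w. grid_E n a u \<and> grid_E n a w \<and> u \<noteq> w"
    by metis
qed (use is_graph_grid grid_triangle_free in blast)+

section \<open>Iterated clique graphs\<close>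

lemma clique_graph_sequence_step_two:
  fixes GV :: "nat \<Rightarrow> 'a set" and GE :: "nat \<Rightarrow> 'a \<Rightarrow> 'a \<Rightarrow> bool"
  assumes Gsuc: "\<And>l. graph_iso (GV (Suc l)) (GE (Suc l)) (clique_V (GV l) (GE l)) (clique_E (GV l) (GE l))"
  shows "graph_iso (GV (l + 2)) (GE (l + 2))
    (clique_V (clique_V (GV l) (GE l)) (clique_E (GV l) (GE l)))
    (clique_E (clique_V (GV l) (GE l)) (clique_E (GV l) (GE l)))"
  using graph_iso_trans[OF Gsuc[of "Suc l"] graph_iso_clique_graph[OF Gsuc[of l]]] by simp

lemma clique_graph_sequence_period_two:
  fixes GV :: "nat \<Rightarrow> 'a set" and GE :: "nat \<Rightarrow> 'a \<Rightarrow> 'a \<Rightarrow> bool"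
  assumes Gsuc: "\<And>l. graph_iso (GV (Suc l)) (GE (Suc l)) (clique_V (GV l) (GE l)) (clique_E (GV l) (GE l))"
    and KK0: "graph_iso (clique_V (clique_V (GV 0) (GE 0)) (clique_E (GV 0) (GE 0)))
      (clique_E (clique_V (GV 0) (GE 0)) (clique_E (GV 0) (GE 0))) (GV 0) (GE 0)"
  shows "graph_iso (GV (l + 2)) (GE (l + 2)) (GV l) (GE l)"
proof (induction l)
  case 0
  show ?case
    using graph_iso_trans[OF clique_graph_sequence_step_two[where GV = GV and GE = GE, OF Gsuc, of 0] KK0]
    by simp
next
  case (Suc l)
  have "graph_iso (GV (Suc l + 2)) (GE (Suc l + 2))
      (clique_V (GV (l + 2)) (GE (l + 2))) (clique_E (GV (l + 2)) (GE (l + 2)))"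
    using Gsuc[of "l + 2"] by simp
  then show ?case
    using graph_iso_trans[OF _ graph_iso_trans[OF graph_iso_clique_graph[OF Suc.IH]
          graph_iso_sym[OF Gsuc[of l]]]]
    by blast
qed

lemma graph_iso_period_two:
  fixes GV :: "nat \<Rightarrow> 'a set" and GE :: "nat \<Rightarrow> 'a \<Rightarrow> 'a \<Rightarrow> bool"
  assumes "\<And>l. graph_iso (GV (l + 2)) (GE (l + 2)) (GV l) (GE l)"
  shows "graph_iso (GV (2 * k + r)) (GE (2 * k + r)) (GV r) (GE r)"
proof (induction k)
  case 0
  show ?case
    by (simp add: graph_iso_refl)
next
  case (Suc k)
  then show ?case
    using graph_iso_trans[OF assms[of "2 * k + r"]] by (simp add: add.commute add.left_commute)
qed

theorem mainTheorem7:
  fixes n :: nat and GV :: "nat \<Rightarrow> 'u set" and GE :: "nat \<Rightarrow> 'u \<Rightarrow> 'u \<Rightarrow> bool"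
  assumes "n \<ge> 1"
    and G0: "graph_iso (GV 0) (GE 0) (grid_V n) (grid_E n)"
    and Gsuc: "\<And>l. graph_iso (GV (Suc l)) (GE (Suc l)) (clique_V (GV l) (GE l)) (clique_E (GV l) (GE l))"
  shows "(\<forall>l. graph_iso (GV (l + 2)) (GE (l + 2)) (GV l) (GE l))
       \<and> (\<forall>k. graph_iso (GV (2 * k)) (GE (2 * k)) (grid_V n) (grid_E n))
       \<and> (\<forall>k. graph_iso (GV (2 * k + 1)) (GE (2 * k + 1)) (GV 1) (GE 1))"
proof -
  interpret grid: triangle_free_min_degree_two "grid_V n" "grid_E n"
    using grid_triangle_free_min_degree_two[OF \<open>n \<ge> 1\<close>] .
  have "graph_iso (clique_V (clique_V (GV 0) (GE 0)) (clique_E (GV 0) (GE 0)))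
      (clique_E (clique_V (GV 0) (GE 0)) (clique_E (GV 0) (GE 0))) (GV 0) (GE 0)"
    using graph_iso_trans[OF graph_iso_clique_graph[OF graph_iso_clique_graph[OF G0]]
        graph_iso_trans[OF graph_iso_sym[OF grid.second_clique_graph_iso] graph_iso_sym[OF G0]]] .
  then have period: "graph_iso (GV (l + 2)) (GE (l + 2)) (GV l) (GE l)" for l
    using clique_graph_sequence_period_two[where GV = GV and GE = GE, OF Gsuc] by blast
  have "graph_iso (GV (2 * k)) (GE (2 * k)) (grid_V n) (grid_E n)" for k
    using graph_iso_trans[OF graph_iso_period_two[where GV = GV and GE = GE, OF period, of k 0] G0] by simp
  moreover have "graph_iso (GV (2 * k + 1)) (GE (2 * k + 1)) (GV 1) (GE 1)" for k
    using graph_iso_period_two[where GV = GV and GE = GE, OF period] .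
  ultimately show ?thesis
    using period by blast
qed

end
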